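(* Let $(M,d)$ be a pointed metric space. The space $\mathrm{Lip}_0(M)$ has the $w^*$-LD2P if and only if $M$ has the 2-Lip-LTP.
   Context: $M$ has base point $0$; $\mathrm{Lip}_0(M)$ is the real Banach space of Lipschitz $f\colon M\to\mathbb R$ with $f(0)=0$, normed by the best Lipschitz constant, with unit ball $B_{\mathrm{Lip}_0(M)}$; it is the dual of the Lipschitz-free space $\mathcal F(M)$ (norm-closed span of the point evaluations $\delta_x$ in $\mathrm{Lip}_0(M)^*$). $\mathrm{Lip}_0(M)$ has the $w^*$-LD2P if every $w^*$-slice $\{f\in B_{\mathrm{Lip}_0(M)}: \mu(f)>1-\alpha\}$, $\mu\in\mathcal F(M)$, $\|\mu\|=1$, $\alpha>0$, has diameter $2$. $\widetilde M=\{(x,y)\in M\times M:x\ne y\}$, $f(m_{x,y})=(f(x)-f(y))/d(x,y)$, $\pi(A)=\{x\in M:\exists y,\ (x,y)\in A\text{ or }(y,x)\in A\}$. $A\subseteq\widetilde M$ is cyclically monotonic if for every finite sequence $(x_1,y_1),\dots,(x_n,y_n)\in A$, with $y_{n+1}=y_1$, $\sum_i d(x_i,y_{i+1})\ge\sum_i d(x_i,y_i)$. $M$ has the 2-Lip-LTP if for every finite cyclically monotonic $A\subseteq\widetilde M$ and every $\varepsilon>0$ there exist $f,g\in B_{\mathrm{Lip}_0(M)}$ and $u,v\in M$ with $u\ne v$ such that $f(m_{x,y})\ge1-\varepsilon$ and $g(m_{x,y})\ge1-\varepsilon$ for all $(x,y)\in A$, and $\max\{f(x)-f(y),g(y)-g(x)\}+(1-\varepsilon)d(u,v)\le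 d(x,u)+d(y,v)$ for all $x,y\in\pi(A)$. *)

theory Defs
  imports "HOL-Analysis.Analysis"
begin

definition Lip0 :: "'a::metric_space \<Rightarrow> ('a \<Rightarrow> real) set" where
  "Lip0 p = {f. (\<exists>C. C-lipschitz_on UNIV f) \<and> f p = 0}"

definition lipnorm :: "('a::metric_space \<Rightarrow> real) \<Rightarrow> real" where
  "lipnorm f = Inf {C. C-lipschitz_on UNIV f}"

definition LipBall :: "'a::metric_space \<Rightarrow> ('a \<Rightarrow> real) set" where
  "LipBall p = {f \<in> Lip0 p. lipnorm f \<le> 1}"

text \<open>Elements of the Lipschitz-free space F(M), viewed as functionals on Lip_0(M):
  norm limits (in the dual norm, i.e. uniformly on the unit ball) of finite linear
  combinations of point evaluations.\<close>
definition free_elem :: "'a::metric_space \<Rightarrow> (('a \<Rightarrow> real) \<Rightarrow> real) \<Rightarrow> bool" where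
  "free_elem p \<mu> \<longleftrightarrow> (\<forall>\<epsilon>>0. \<exists>S (a::'a \<Rightarrow> real). finite S \<and>
      (\<forall>f\<in>LipBall p. \<bar>\<mu> f - (\<Sum>x\<in>S. a x * f x)\<bar> \<le> \<epsilon>))"

definition dual_norm :: "'a::metric_space \<Rightarrow> (('a \<Rightarrow> real) \<Rightarrow> real) \<Rightarrow> real" where
  "dual_norm p \<mu> = (SUP f\<in>LipBall p. \<bar>\<mu> f\<bar>)"

definition wstar_slice :: "'a::metric_space \<Rightarrow> (('a \<Rightarrow> real) \<Rightarrow> real) \<Rightarrow> real \<Rightarrow> ('a \<Rightarrow> real) set" where
  "wstar_slice p \<mu> \<alpha> = {f \<in> LipBall p. \<mu> f > 1 - \<alpha>}"

definition lip_diam :: "('a::metric_space \<Rightarrow> real) set \<Rightarrow> real" where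
  "lip_diam S = (SUP fg\<in>S \<times> S. lipnorm (\<lambda>x. fst fg x - snd fg x))"

definition wstar_LD2P :: "'a::metric_space \<Rightarrow> bool" where
  "wstar_LD2P p \<longleftrightarrow> (\<forall>\<mu> \<alpha>. free_elem p \<mu> \<and> dual_norm p \<mu> = 1 \<and> \<alpha> > 0 \<longrightarrow>
      lip_diam (wstar_slice p \<mu> \<alpha>) = 2)"

definition mol :: "('a::metric_space \<Rightarrow> real) \<Rightarrow> 'a \<Rightarrow> 'a \<Rightarrow> real" where
  "mol f x y = (f x - f y) / dist x y"

definition piA :: "('a \<times> 'a) set \<Rightarrow> 'a set" where
  "piA A = fst ` A \<union> snd ` A"

definition cyc_monotonic :: "('a::metric_space \<times> 'a) set \<Rightarrow> bool" where
  "cyc_monotonic A \<longleftrightarrow> (\<forall>ps. set ps \<subseteq> A \<longrightarrow>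
      (\<Sum>i<length ps. dist (fst (ps ! i)) (snd (ps ! ((i + 1) mod length ps))))
        \<ge> (\<Sum>i<length ps. dist (fst (ps ! i)) (snd (ps ! i))))"

definition two_Lip_LTP :: "'a::metric_space \<Rightarrow> bool" where
  "two_Lip_LTP p \<longleftrightarrow> (\<forall>A \<epsilon>. finite A \<and> A \<subseteq> {(x, y). x \<noteq> y} \<and> cyc_monotonic A \<and> \<epsilon> > 0 \<longrightarrow>
     (\<exists>f\<in>LipBall p. \<exists>g\<in>LipBall p. \<exists>u v. u \<noteq> v \<and>
        (\<forall>(x, y)\<in>A. mol f x y \<ge> 1 - \<epsilon> \<and> mol g x y \<ge> 1 - \<epsilon>) \<and>
        (\<forall>x\<in>piA A. \<forall>y\<in>piA A.
           max (f x - f y) (g y - g x) + (1 - \<epsilon>) * dist u v \<le> dist x u + dist y v)))"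

end

theory Submission
  imports Defs
begin

text \<open>
  Both directions revolve around a finite cyclically monotonic set \<open>A\<close> of pairs and the
  average \<open>\<mu>\<^sub>A\<close> of the molecules \<open>m\<^sub>x\<^sub>y\<close>, \<open>(x, y) \<in> A\<close>.

  From the w*-LD2P to the 2-Lip-LTP: Rockafellar's construction gives a 1-Lipschitz \<open>F\<close> with
  \<open>F x - F y = d(x, y)\<close> on \<open>A\<close>, so \<open>\<mu>\<^sub>A\<close> has norm one. Every element of the slice of
  \<open>\<mu>\<^sub>A\<close> of width \<open>\<epsilon> / |A|\<close> has all molecules of \<open>A\<close> above \<open>1 - \<epsilon>\<close>, and two elements
  \<open>f, g\<close> of it with \<open>\<parallel>f - g\<parallel>\<close> close to 2 have almost opposite slopes \<open>\<plusminus>1\<close> on some pair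
  \<open>u, v\<close>, which by the triangle inequality is the required inequality.

  From the 2-Lip-LTP to the w*-LD2P: approximate a norm-one \<open>\<mu>\<close> by a finitely supported
  functional \<open>\<Phi>\<close> and take a maximiser \<open>h\<^sub>0\<close> of \<open>\<Phi>\<close> among 1-Lipschitz functions on its support.
  The pairs on which \<open>h\<^sub>0\<close> is tight form a cyclically monotonic set \<open>A\<close>, and by maximality every
  function that is almost tight on \<open>A\<close> almost maximises \<open>\<Phi>\<close>, hence lies in the slice. The
  2-Lip-LTP for \<open>A\<close> gives \<open>f, g, u, v\<close>; extending \<open>f\<close> and \<open>g\<close> from \<open>\<pi>(A)\<close> so that
  \<open>f v - f u\<close> and \<open>g u - g v\<close> stay close to \<open>d(u, v)\<close> yields two elements of the slice at
  distance close to 2.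
\<close>

lemma lipschitz_on_1_iff:
  fixes f :: "'a::metric_space \<Rightarrow> real"
  shows "1-lipschitz_on S f \<longleftrightarrow> (\<forall>x\<in>S. \<forall>y\<in>S. f x - f y \<le> dist x y)"
proof
  assume one_sided: "\<forall>x\<in>S. \<forall>y\<in>S. f x - f y \<le> dist x y"
  show "1-lipschitz_on S f"
  proof (rule lipschitz_onI)
    fix x y assume "x \<in> S" "y \<in> S"
    then show "dist (f x) (f y) \<le> 1 * dist x y"
      using one_sided by (auto simp: dist_real_def abs_le_iff dist_commute)
  qed simp
next
  assume lip: "1-lipschitz_on S f"
  show "\<forall>x\<in>S. \<forall>y\<in>S. f x - f y \<le> dist x y"
  proof (intro ballI)
    fix x y assume "x \<in> S" "y \<in> S"
    then have "dist (f x) (f y) \<le> 1 * dist x y" by (rule lipschitz_onD[OF lip])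
    then show "f x - f y \<le> dist x y" by (simp add: dist_real_def)
  qed
qed

lemma lipschitz_on_dist: "1-lipschitz_on S (dist a)"
proof -
  have "dist a x - dist a y \<le> dist x y" for x y
    using dist_triangle[of a x y] by (simp add: dist_commute)
  then show ?thesis by (simp add: lipschitz_on_1_iff)
qed

lemma lipnorm_le:
  assumes "C-lipschitz_on UNIV f"
  shows "lipnorm f \<le> C"
  unfolding lipnorm_def
  by (rule cInf_lower) (use assms in \<open>auto intro!: bdd_belowI[of _ 0] lipschitz_on_nonneg\<close>)

lemma diff_quotient_le_lipnorm:
  assumes "C-lipschitz_on UNIV f" "x \<noteq> y"
  shows "(f x - f y) / dist x y \<le> lipnorm f"
  unfolding lipnorm_def
proof (rule cInf_greatest)
  show "{C. C-lipschitz_on UNIV f} \<noteq> {}" using assms(1) by blast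
next
  fix L assume "L \<in> {C. C-lipschitz_on UNIV f}"
  then have "f x - f y \<le> L * dist x y"
    by (auto dest!: lipschitz_onD[of L UNIV f x y] simp: dist_real_def)
  then show "(f x - f y) / dist x y \<le> L" using assms(2) by (simp add: divide_le_eq)
qed

lemma less_lipnorm_iff:
  assumes "C-lipschitz_on UNIV f" "0 \<le> c"
  shows "c < lipnorm f \<longleftrightarrow> (\<exists>x y. c * dist x y < f x - f y)"
proof
  assume "c < lipnorm f"
  show "\<exists>x y. c * dist x y < f x - f y"
  proof (rule ccontr)
    assume none: "\<not> ?thesis"
    have "c-lipschitz_on UNIV f"
    proof (intro lipschitz_onI)
      fix x y
      have "f x - f y \<le> c * dist x y" "f y - f x \<le> c * dist y x"
        using none by (simp_all add: not_less)
      then show "dist (f x) (f y) \<le> c * dist x y"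
        by (simp add: dist_real_def abs_le_iff dist_commute)
    qed (rule assms(2))
    with \<open>c < lipnorm f\<close> show False using lipnorm_le by fastforce
  qed
next
  assume "\<exists>x y. c * dist x y < f x - f y"
  then obtain x y where xy: "c * dist x y < f x - f y" by blast
  then have "x \<noteq> y" by auto
  with xy have "c < (f x - f y) / dist x y" by (simp add: less_divide_eq)
  also have "\<dots> \<le> lipnorm f" by (rule diff_quotient_le_lipnorm[OF assms(1) \<open>x \<noteq> y\<close>])
  finally show "c < lipnorm f" .
qed

lemma LipBall_iff: "f \<in> LipBall p \<longleftrightarrow> 1-lipschitz_on UNIV f \<and> f p = 0"
proof
  assume "f \<in> LipBall p"
  then obtain C where C: "C-lipschitz_on UNIV f" and "lipnorm f \<le> 1" "f p = 0"
    by (auto simp: LipBall_def Lip0_def)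
  moreover have "f x - f y \<le> dist x y" for x y
  proof (cases "x = y")
    case False
    then have "(f x - f y) / dist x y \<le> 1"
      using diff_quotient_le_lipnorm[OF C] \<open>lipnorm f \<le> 1\<close> by (meson order_trans)
    then show ?thesis using False by (simp add: divide_le_eq)
  qed simp
  ultimately show "1-lipschitz_on UNIV f \<and> f p = 0" by (simp add: lipschitz_on_1_iff)
qed (auto simp: LipBall_def Lip0_def intro: lipnorm_le)

lemma LipBall_D: "f \<in> LipBall p \<Longrightarrow> f x - f y \<le> dist x y"
  by (simp add: LipBall_iff lipschitz_on_1_iff)

lemma LipBall_normalize:
  fixes F :: "'a::metric_space \<Rightarrow> real"
  assumes "1-lipschitz_on UNIV F"
  shows "(\<lambda>x. F x - F p) \<in> LipBall p"
  using assms by (simp add: LipBall_iff lipschitz_on_1_iff)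

lemma zero_in_LipBall: "(\<lambda>_. 0) \<in> LipBall p"
  by (simp add: LipBall_iff lipschitz_on_1_iff)

lemma uminus_in_LipBall: "f \<in> LipBall p \<Longrightarrow> (\<lambda>x. - f x) \<in> LipBall p"
  by (simp add: LipBall_iff)

lemma LipBall_diff_lipschitz:
  "f \<in> LipBall p \<Longrightarrow> g \<in> LipBall p \<Longrightarrow> 2-lipschitz_on UNIV (\<lambda>x. f x - g x)"
  using lipschitz_on_diff[of 1 UNIV f 1 g] by (simp add: LipBall_iff)

lemma abs_mol_le_1:
  assumes "f \<in> LipBall p"
  shows "\<bar>mol f x y\<bar> \<le> 1"
  using LipBall_D[OF assms, of x y] LipBall_D[OF assms, of y x]
  by (cases "x = y") (auto simp: mol_def abs_le_iff divide_le_eq le_divide_eq dist_commute)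

lemma lip_diam_eq_2_iff:
  assumes "S \<subseteq> LipBall p" "S \<noteq> {}"
  shows "lip_diam S = 2 \<longleftrightarrow> (\<forall>c<2. \<exists>f\<in>S. \<exists>g\<in>S. c < lipnorm (\<lambda>x. f x - g x))"
proof -
  have le2: "lipnorm (\<lambda>x. fst fg x - snd fg x) \<le> 2" if "fg \<in> S \<times> S" for fg
    using that assms(1) by (auto intro!: lipnorm_le LipBall_diff_lipschitz)
  have ne: "S \<times> S \<noteq> {}" using assms(2) by simp
  have bdd: "bdd_above ((\<lambda>fg. lipnorm (\<lambda>x. fst fg x - snd fg x)) ` (S \<times> S))"
    using le2 by (intro bdd_aboveI2)
  have "lip_diam S \<le> 2"
    unfolding lip_diam_def using le2 by (intro cSUP_least[OF ne])
  then have "lip_diam S = 2 \<longleftrightarrow> (\<forall>c<2. c < lip_diam S)"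
    using dense_le[of 2 "lip_diam S"] by (auto simp: less_imp_le)
  also have "\<dots> \<longleftrightarrow> (\<forall>c<2. \<exists>f\<in>S. \<exists>g\<in>S. c < lipnorm (\<lambda>x. f x - g x))"
    unfolding lip_diam_def less_cSUP_iff[OF ne bdd] by auto
  finally show ?thesis .
qed

lemma opposite_slopes_if_lipnorm_diff_gt:
  assumes "f \<in> LipBall p" "g \<in> LipBall p" "2 - \<eta> < lipnorm (\<lambda>x. f x - g x)" "\<eta> \<le> 2"
  obtains u v where "(1 - \<eta>) * dist u v < f v - f u" "(1 - \<eta>) * dist u v < g u - g v"
proof -
  obtain v u where vu: "(2 - \<eta>) * dist v u < (f v - g v) - (f u - g u)"
    using assms less_lipnorm_iff[OF LipBall_diff_lipschitz[OF assms(1,2)]] by auto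
  have "f v - f u \<le> dist u v" "g u - g v \<le> dist u v"
    using LipBall_D[OF assms(1), of v u] LipBall_D[OF assms(2), of u v]
    by (simp_all add: dist_commute)
  with vu have "(1 - \<eta>) * dist u v < f v - f u" "(1 - \<eta>) * dist u v < g u - g v"
    by (simp_all add: dist_commute algebra_simps)
  then show thesis by (rule that)
qed

lemma lipnorm_diff_ge_if_opposite_slopes:
  assumes "f \<in> LipBall p" "g \<in> LipBall p" "u \<noteq> v"
    "c * dist u v \<le> f v - f u" "c * dist u v \<le> g u - g v"
  shows "2 * c \<le> lipnorm (\<lambda>x. f x - g x)"
proof -
  have "2 * c \<le> ((f v - g v) - (f u - g u)) / dist v u"
    using assms(3-5) by (simp add: le_divide_eq dist_commute algebra_simps)
  also have "\<dots> \<le> lipnorm (\<lambda>x. f x - g x)"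
    using assms(3)
    by (intro diff_quotient_le_lipnorm[OF LipBall_diff_lipschitz[OF assms(1,2)]]) auto
  finally show ?thesis .
qed

section \<open>Cyclic monotonicity and Rockafellar potentials\<close>

lemma cyc_monotonic_iff_rotate1:
  "cyc_monotonic A \<longleftrightarrow> (\<forall>qs. set qs \<subseteq> A \<longrightarrow>
     (\<Sum>q\<leftarrow>qs. dist (fst q) (snd q)) \<le> (\<Sum>(q, q')\<leftarrow>zip qs (rotate1 qs). dist (fst q) (snd q')))"
proof -
  have "(\<Sum>i<length qs. dist (fst (qs ! i)) (snd (qs ! ((i + 1) mod length qs))))
      = (\<Sum>(q, q')\<leftarrow>zip qs (rotate1 qs). dist (fst q) (snd q'))"
    and "(\<Sum>i<length qs. dist (fst (qs ! i)) (snd (qs ! i))) = (\<Sum>q\<leftarrow>qs. dist (fst q) (snd q))"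
    for qs :: "('a \<times> 'a) list"
    by (simp_all add: sum_list_sum_nth atLeast0LessThan nth_rotate1)
  then show ?thesis by (simp add: cyc_monotonic_def)
qed

lemma sum_list_zip_diff:
  "length xs = length ys \<Longrightarrow>
    (\<Sum>(x, y)\<leftarrow>zip xs ys. f x - g y) = (\<Sum>x\<leftarrow>xs. f x) - (\<Sum>y\<leftarrow>ys. (g y :: 'a::ab_group_add))"
  by (induction xs ys rule: list_induct2) simp_all

lemma sum_list_rotate1: "(\<Sum>x\<leftarrow>rotate1 xs. f x) = (\<Sum>x\<leftarrow>xs. (f x :: 'a::comm_monoid_add))"
  by (cases xs) (simp_all add: add.commute)

lemma cyc_monotonic_if_tight:
  fixes h :: "'a::metric_space \<Rightarrow> real"
  assumes "1-lipschitz_on S h" "A \<subseteq> S \<times> S" "\<forall>(x, y)\<in>A. h x - h y = dist x y"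
  shows "cyc_monotonic A"
  unfolding cyc_monotonic_iff_rotate1
proof (intro allI impI)
  fix qs assume qs: "set qs \<subseteq> A"
  have "(\<Sum>q\<leftarrow>qs. dist (fst q) (snd q)) = (\<Sum>q\<leftarrow>qs. h (fst q) - h (snd q))"
    using qs assms(3) by (intro arg_cong[where f = sum_list] map_cong) fastforce+
  also have "\<dots> = (\<Sum>(q, q')\<leftarrow>zip qs (rotate1 qs). h (fst q) - h (snd q'))"
    by (simp add: sum_list_zip_diff sum_list_subtractf sum_list_rotate1)
  also have "\<dots> \<le> (\<Sum>(q, q')\<leftarrow>zip qs (rotate1 qs). dist (fst q) (snd q'))"
  proof (rule sum_list_mono, clarify)
    fix q q' assume "(q, q') \<in> set (zip qs (rotate1 qs))"
    then have "q \<in> set qs" "q' \<in> set (rotate1 qs)" by (auto dest: set_zip_leftD set_zip_rightD)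
    then have "q \<in> A" "q' \<in> A" using qs by auto
    then have "fst q \<in> S" "snd q' \<in> S" using assms(2) by auto
    then show "h (fst q) - h (snd q') \<le> dist (fst q) (snd q')"
      using assms(1) by (simp add: lipschitz_on_1_iff)
  qed
  finally show "(\<Sum>q\<leftarrow>qs. dist (fst q) (snd q))
      \<le> (\<Sum>(q, q')\<leftarrow>zip qs (rotate1 qs). dist (fst q) (snd q'))" .
qed

text \<open>
  \<open>chain_excess b z [(x\<^sub>1, y\<^sub>1), \<dots>, (x\<^sub>k, y\<^sub>k)] =
    d(z, y\<^sub>1) - d(x\<^sub>1, y\<^sub>1) + d(x\<^sub>1, y\<^sub>2) - \<dots> - d(x\<^sub>k, y\<^sub>k) + d(x\<^sub>k, b)\<close>;
  its infimum over chains in \<open>A\<close> is Rockafellar's potential.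
\<close>

fun chain_excess :: "'a::metric_space \<Rightarrow> 'a \<Rightarrow> ('a \<times> 'a) list \<Rightarrow> real" where
  "chain_excess b z [] = dist z b"
| "chain_excess b z ((x, y) # ps) = dist z y - dist x y + chain_excess b x ps"

lemma chain_excess_eq_cyclic_sum:
  "chain_excess b z ps = (\<Sum>(q, q')\<leftarrow>zip ((z, w) # ps) (ps @ [(c, b)]). dist (fst q) (snd q'))
     - (\<Sum>q\<leftarrow>ps. dist (fst q) (snd q))"
  by (induction ps arbitrary: z w) auto

lemma chain_excess_ge:
  assumes "cyc_monotonic A" "(x, y) \<in> A" "set ps \<subseteq> A"
  shows "dist x y \<le> chain_excess y x ps"
  using assms chain_excess_eq_cyclic_sum[of y x ps y x]
  unfolding cyc_monotonic_iff_rotate1 by (force dest!: spec[of _ "(x, y) # ps"])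

lemma chain_excess_lipschitz: "chain_excess b z ps - chain_excess b z' ps \<le> dist z z'"
proof (cases ps)
  case Nil
  then show ?thesis using dist_triangle[of z b z'] by simp
next
  case (Cons q qs)
  then show ?thesis using dist_triangle[of z "snd q" z'] by (cases q) simp
qed

theorem cyc_monotonic_potential:
  assumes "cyc_monotonic A" "A \<noteq> {}"
  obtains F where "1-lipschitz_on UNIV F" "\<forall>(x, y)\<in>A. F x - F y = dist x y"
proof -
  obtain x0 y0 where xy0: "(x0, y0) \<in> A" using assms(2) by auto
  define Ch where "Ch = {ps. set ps \<subseteq> A}"
  define F where "F z = (INF ps\<in>Ch. chain_excess y0 z ps)" for z
  have "[] \<in> Ch" by (simp add: Ch_def)
  then have Ch_ne: "Ch \<noteq> {}" by blast
  have bdd: "bdd_below ((\<lambda>ps. chain_excess y0 z ps) ` Ch)" for z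
  proof (rule bdd_belowI2)
    fix ps assume "ps \<in> Ch"
    then have "dist x0 y0 \<le> chain_excess y0 x0 ps"
      using chain_excess_ge[OF assms(1) xy0] by (simp add: Ch_def)
    then show "- dist x0 z \<le> chain_excess y0 z ps"
      using chain_excess_lipschitz[of y0 x0 ps z] zero_le_dist[of x0 y0] by linarith
  qed
  have F_le: "F z \<le> chain_excess y0 z ps" if "ps \<in> Ch" for z ps
    unfolding F_def using bdd that by (rule cINF_lower)
  have "F z - dist z z' \<le> F z'" for z z'
    unfolding F_def[of z'] using Ch_ne
  proof (rule cINF_greatest)
    fix ps assume "ps \<in> Ch"
    then show "F z - dist z z' \<le> chain_excess y0 z' ps"
      using F_le[of ps z] chain_excess_lipschitz[of y0 z ps z'] by linarith
  qed
  then have F_lip: "1-lipschitz_on UNIV F" by (simp add: lipschitz_on_1_iff algebra_simps)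
  have "F y + dist x y \<le> F x" if "(x, y) \<in> A" for x y
    unfolding F_def[of x] using Ch_ne
  proof (rule cINF_greatest)
    fix ps assume "ps \<in> Ch"
    then have "F y \<le> chain_excess y0 y ((x, y) # ps)" using that by (intro F_le) (simp add: Ch_def)
    then show "F y + dist x y \<le> chain_excess y0 x ps" by simp
  qed
  moreover have "F x - F y \<le> dist x y" for x y using F_lip by (simp add: lipschitz_on_1_iff)
  ultimately have "\<forall>(x, y)\<in>A. F x - F y = dist x y" by (force intro: antisym)
  with F_lip show thesis by (rule that)
qed

section \<open>Averages of molecules\<close>

lemma free_elem_point_sum:
  fixes x :: "'i \<Rightarrow> 'a::metric_space"
  assumes "finite I"
  shows "free_elem p (\<lambda>f. \<Sum>i\<in>I. c i * f (x i))"
  unfolding free_elem_def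
proof (intro allI impI exI conjI)
  define a where "a z = (\<Sum>i\<in>{i\<in>I. x i = z}. c i)" for z
  show "finite (x ` I)" using assms by simp
  have "(\<Sum>i\<in>I. c i * f (x i)) = (\<Sum>z\<in>x ` I. a z * f z)" for f :: "'a \<Rightarrow> real"
  proof -
    have "(\<Sum>i\<in>I. c i * f (x i)) = (\<Sum>z\<in>x ` I. \<Sum>i\<in>{i\<in>I. x i = z}. c i * f (x i))"
      by (rule sum.image_gen[OF assms])
    also have "\<dots> = (\<Sum>z\<in>x ` I. a z * f z)"
      unfolding a_def sum_distrib_right by (intro sum.cong refl) auto
    finally show ?thesis .
  qed
  then show "\<forall>f\<in>LipBall p. \<bar>(\<Sum>i\<in>I. c i * f (x i)) - (\<Sum>z\<in>x ` I. a z * f z)\<bar> \<le> \<epsilon>"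
    if "\<epsilon> > 0" for \<epsilon> using that by simp
qed

definition mol_average :: "('a::metric_space \<times> 'a) set \<Rightarrow> ('a \<Rightarrow> real) \<Rightarrow> real" where
  "mol_average A f = (\<Sum>(x, y)\<in>A. mol f x y) / card A"

lemma free_elem_mol_average:
  fixes A :: "('a::metric_space \<times> 'a) set"
  assumes "finite A"
  shows "free_elem p (mol_average A)"
proof -
  define w :: "'a \<times> 'a \<Rightarrow> real" where "w = (\<lambda>(x, y). 1 / (card A * dist x y))"
  have "mol_average A f = (\<Sum>i\<in>A <+> A. case_sum w (\<lambda>q. - w q) i * f (case_sum fst snd i))"
    for f :: "'a \<Rightarrow> real"
    using assms
    by (simp add: sum.Plus mol_average_def mol_def w_def case_prod_unfold sum_divide_distrib
        flip: sum.distrib) (auto intro!: sum.cong simp: diff_divide_distrib mult.commute)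
  then have "mol_average A = (\<lambda>f. \<Sum>i\<in>A <+> A. case_sum w (\<lambda>q. - w q) i * f (case_sum fst snd i))"
    by (rule ext)
  then show ?thesis using assms by (simp add: free_elem_point_sum)
qed

lemma abs_mol_average_le_1:
  assumes "f \<in> LipBall p"
  shows "\<bar>mol_average A f\<bar> \<le> 1"
proof (cases "finite A")
  case True
  have "\<bar>\<Sum>(x, y)\<in>A. mol f x y\<bar> \<le> (\<Sum>(x, y)\<in>A. 1)"
    using abs_mol_le_1[OF assms] by (intro order_trans[OF sum_abs] sum_mono) auto
  then show ?thesis by (cases "card A = 0") (simp_all add: mol_average_def divide_le_eq_1)
qed (simp add: mol_average_def)

lemma mol_average_tight:
  assumes "finite A" "A \<noteq> {}" "A \<subseteq> {(x, y). x \<noteq> y}" "\<forall>(x, y)\<in>A. F x - F y = dist x y"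
  shows "mol_average A F = 1"
proof -
  have "(\<Sum>(x, y)\<in>A. mol F x y) = (\<Sum>(x, y)\<in>A. 1)"
  proof (intro sum.cong refl, clarify)
    fix x y assume "(x, y) \<in> A"
    then have "x \<noteq> y" "F x - F y = dist x y" using assms(3,4) by auto
    then show "mol F x y = 1" by (simp add: mol_def)
  qed
  then show ?thesis using assms(1,2) by (simp add: mol_average_def)
qed

lemma mol_gt_if_mol_average_gt:
  assumes "f \<in> LipBall p" "finite A" "(x, y) \<in> A" "1 - \<epsilon> / card A < mol_average A f"
  shows "1 - \<epsilon> < mol f x y"
proof -
  have n: "card A > 0" using assms(2,3) card_gt_0_iff by blast
  have "(card A - \<epsilon>) / card A < (\<Sum>(x, y)\<in>A. mol f x y) / card A"
    using assms(4) n by (simp add: mol_average_def diff_divide_distrib)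
  then have "card A - \<epsilon> < (\<Sum>(x, y)\<in>A. mol f x y)"
    using n by (simp add: divide_less_cancel)
  also have "\<dots> = mol f x y + (\<Sum>(x, y)\<in>A - {(x, y)}. mol f x y)"
    using assms(2,3) by (simp add: sum.remove)
  also have "\<dots> \<le> mol f x y + (\<Sum>(x, y)\<in>A - {(x, y)}. 1)"
    using abs_mol_le_1[OF assms(1)] by (intro add_left_mono sum_mono) (auto simp: abs_le_iff)
  also have "\<dots> = mol f x y + (real (card A) - 1)"
    using assms(2,3) n by simp
  finally show ?thesis by simp
qed

lemma dual_norm_eq_1I:
  assumes "\<forall>f\<in>LipBall p. \<bar>\<mu> f\<bar> \<le> 1" "F \<in> LipBall p" "\<mu> F = 1"
  shows "dual_norm p \<mu> = 1"
  unfolding dual_norm_def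
proof (rule cSup_eq_maximum)
  show "1 \<in> (\<lambda>f. \<bar>\<mu> f\<bar>) ` LipBall p" using assms(2,3) by force
qed (use assms(1) in auto)

lemma mol_average_attains_1:
  assumes "finite A" "A \<noteq> {}" "A \<subseteq> {(x, y). x \<noteq> y}" "cyc_monotonic A"
  obtains F where "F \<in> LipBall p" "mol_average A F = 1"
proof -
  obtain F where F: "1-lipschitz_on UNIV F" "\<forall>(x, y)\<in>A. F x - F y = dist x y"
    using cyc_monotonic_potential[OF assms(4,2)] by blast
  then have "mol_average A (\<lambda>x. F x - F p) = 1"
    using assms(1-3) by (intro mol_average_tight) auto
  with LipBall_normalize[OF F(1)] show thesis by (rule that)
qed

lemma max_le_if_opposite_slopes:
  assumes "f \<in> LipBall p" "g \<in> LipBall p" "c * dist u v \<le> f v - f u" "c * dist u v \<le> g u - g v"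
  shows "max (f x - f y) (g y - g x) + c * dist u v \<le> dist x u + dist y v"
proof -
  have "f x - f u \<le> dist x u" "f v - f y \<le> dist y v" "g y - g v \<le> dist y v" "g u - g x \<le> dist x u"
    using LipBall_D[OF assms(1), of x u] LipBall_D[OF assms(1), of v y]
      LipBall_D[OF assms(2), of y v] LipBall_D[OF assms(2), of u x]
    by (simp_all add: dist_commute)
  then show ?thesis using assms(3,4) by simp
qed

lemma wstar_LD2P_opposite_slopes:
  assumes "wstar_LD2P p" "finite A" "A \<noteq> {}" "A \<subseteq> {(x, y). x \<noteq> y}" "cyc_monotonic A" "0 < \<epsilon>"
  obtains f g u v where "f \<in> LipBall p" "g \<in> LipBall p" "u \<noteq> v"
    "\<forall>(x, y)\<in>A. 1 - \<epsilon> \<le> mol f x y \<and> 1 - \<epsilon> \<le> mol g x y"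
    "(1 - \<epsilon>) * dist u v \<le> f v - f u" "(1 - \<epsilon>) * dist u v \<le> g u - g v"
proof -
  obtain F where F: "F \<in> LipBall p" "mol_average A F = 1"
    using mol_average_attains_1[OF assms(2-5)] by blast
  define \<alpha> where "\<alpha> = \<epsilon> / card A"
  have "\<alpha> > 0" using assms(2,3,6) by (simp add: \<alpha>_def card_gt_0_iff)
  define Sl where "Sl = wstar_slice p (mol_average A) \<alpha>"
  have Sl_Ball: "Sl \<subseteq> LipBall p" by (auto simp: Sl_def wstar_slice_def)
  have "dual_norm p (mol_average A) = 1"
    using F abs_mol_average_le_1 by (intro dual_norm_eq_1I) auto
  with \<open>\<alpha> > 0\<close> have "lip_diam Sl = 2"
    using assms(1) free_elem_mol_average[OF assms(2)] by (simp add: wstar_LD2P_def Sl_def)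
  moreover have "F \<in> Sl" using F \<open>\<alpha> > 0\<close> by (simp add: Sl_def wstar_slice_def)
  moreover have "2 - min \<epsilon> 1 < 2" using assms(6) by simp
  ultimately obtain f g where fg: "f \<in> Sl" "g \<in> Sl" "2 - min \<epsilon> 1 < lipnorm (\<lambda>x. f x - g x)"
    using lip_diam_eq_2_iff[OF Sl_Ball] by blast
  then have fB: "f \<in> LipBall p" and gB: "g \<in> LipBall p" using Sl_Ball by auto
  have "min \<epsilon> 1 \<le> 2" by simp
  with fB gB fg(3) obtain u v
    where uv: "(1 - min \<epsilon> 1) * dist u v < f v - f u" "(1 - min \<epsilon> 1) * dist u v < g u - g v"
    by (rule opposite_slopes_if_lipnorm_diff_gt)
  moreover have "(1 - \<epsilon>) * dist u v \<le> (1 - min \<epsilon> 1) * dist u v" by (intro mult_right_mono) auto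
  moreover have "1 - \<epsilon> < mol h x y" if "h \<in> Sl" "(x, y) \<in> A" for h x y
    using that assms(2) Sl_Ball
    by (intro mol_gt_if_mol_average_gt) (auto simp: Sl_def wstar_slice_def \<alpha>_def)
  then have "\<forall>(x, y)\<in>A. 1 - \<epsilon> \<le> mol f x y \<and> 1 - \<epsilon> \<le> mol g x y"
    using fg(1,2) by (auto intro: less_imp_le)
  ultimately show thesis using fB gB by (intro that[of f g u v]) auto
qed

theorem two_Lip_LTP_if_wstar_LD2P:
  fixes p :: "'a::metric_space"
  assumes "\<exists>x y :: 'a. x \<noteq> y" "wstar_LD2P p"
  shows "two_Lip_LTP p"
  unfolding two_Lip_LTP_def
proof (intro allI impI, elim conjE)
  fix A :: "('a \<times> 'a) set" and \<epsilon> :: real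
  assume A: "finite A" "A \<subseteq> {(x, y). x \<noteq> y}" "cyc_monotonic A" and "\<epsilon> > 0"
  show "\<exists>f\<in>LipBall p. \<exists>g\<in>LipBall p. \<exists>u v. u \<noteq> v \<and>
          (\<forall>(x, y)\<in>A. 1 - \<epsilon> \<le> mol f x y \<and> 1 - \<epsilon> \<le> mol g x y) \<and>
          (\<forall>x\<in>piA A. \<forall>y\<in>piA A.
             max (f x - f y) (g y - g x) + (1 - \<epsilon>) * dist u v \<le> dist x u + dist y v)"
  proof (cases "A = {}")
    case True
    with assms(1) zero_in_LipBall show ?thesis by (auto simp: piA_def)
  next
    case False
    obtain f g u v where fg: "f \<in> LipBall p" "g \<in> LipBall p" "u \<noteq> v"
      "\<forall>(x, y)\<in>A. 1 - \<epsilon> \<le> mol f x y \<and> 1 - \<epsilon> \<le> mol g x y"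
      and uv: "(1 - \<epsilon>) * dist u v \<le> f v - f u" "(1 - \<epsilon>) * dist u v \<le> g u - g v"
      using wstar_LD2P_opposite_slopes[OF assms(2) A(1) False A(2,3) \<open>\<epsilon> > 0\<close>] by blast
    then show ?thesis using max_le_if_opposite_slopes[OF fg(1,2) uv] by blast
  qed
qed

section \<open>Maximisers of finitely supported functionals\<close>

lemma free_elem_approx_with_base:
  assumes "free_elem p \<mu>" "e > 0"
  obtains S a where "finite S" "p \<in> S" "\<forall>f\<in>LipBall p. \<bar>\<mu> f - (\<Sum>x\<in>S. a x * f x)\<bar> \<le> e"
proof -
  obtain S a where S: "finite S" "\<forall>f\<in>LipBall p. \<bar>\<mu> f - (\<Sum>x\<in>S. a x * f x)\<bar> \<le> e"
    using assms unfolding free_elem_def by blast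
  have "(\<Sum>x\<in>insert p S. a x * f x) = (\<Sum>x\<in>S. a x * f x)" if "f \<in> LipBall p" for f
    using that S(1) by (simp add: sum.insert_if LipBall_iff)
  with S show thesis by (intro that[of "insert p S" a]) auto
qed

lemma abs_point_sum_le:
  assumes "f \<in> LipBall p"
  shows "\<bar>\<Sum>x\<in>S. a x * f x\<bar> \<le> (\<Sum>x\<in>S. \<bar>a x\<bar> * dist x p)"
proof -
  have "\<bar>f x\<bar> \<le> dist x p" for x
    using LipBall_D[OF assms, of x p] LipBall_D[OF assms, of p x] assms
    by (auto simp: LipBall_iff dist_commute)
  then show ?thesis
    by (intro order_trans[OF sum_abs] sum_mono) (simp add: abs_mult mult_left_mono)
qed

lemma point_sum_near_dual_norm:
  assumes "finite S" "dual_norm p \<mu> = 1" "\<forall>f\<in>LipBall p. \<bar>\<mu> f - (\<Sum>x\<in>S. a x * f x)\<bar> \<le> e" "e > 0"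
  obtains f where "f \<in> LipBall p" "1 - 2 * e < (\<Sum>x\<in>S. a x * f x)"
proof -
  have "bdd_above ((\<lambda>f. \<bar>\<mu> f\<bar>) ` LipBall p)"
  proof (rule bdd_aboveI2)
    fix f assume "f \<in> LipBall p"
    then show "\<bar>\<mu> f\<bar> \<le> (\<Sum>x\<in>S. \<bar>a x\<bar> * dist x p) + e"
      using assms(3) abs_point_sum_le[of f p a S] by fastforce
  qed
  moreover have "1 - e < (SUP f\<in>LipBall p. \<bar>\<mu> f\<bar>)"
    using assms(2,4) by (simp add: dual_norm_def)
  ultimately obtain f0 where f0: "f0 \<in> LipBall p" "1 - e < \<bar>\<mu> f0\<bar>"
    using zero_in_LipBall less_cSUP_iff[of "LipBall p"] by blast
  then have "1 - 2 * e < \<bar>\<Sum>x\<in>S. a x * f0 x\<bar>" using assms(3) by fastforce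
  moreover have "(\<Sum>x\<in>S. a x * - f0 x) = - (\<Sum>x\<in>S. a x * f0 x)" by (simp add: sum_negf)
  ultimately show thesis
    using that[OF f0(1)] that[OF uminus_in_LipBall[OF f0(1)]]
    by (cases "0 \<le> (\<Sum>x\<in>S. a x * f0 x)") auto
qed

lemma compactin_pointed_short_maps:
  fixes S :: "'a::metric_space set"
  defines "X \<equiv> product_topology (\<lambda>_. euclideanreal) S"
  assumes "p \<in> S"
  shows "compactin X {h \<in> topspace X. h p = 0 \<and> 1-lipschitz_on S h}" (is "compactin X ?K")
proof -
  have proj: "continuous_map X euclideanreal (\<lambda>h. h x)" if "x \<in> S" for x
    unfolding X_def using continuous_map_product_projection[OF that, of "\<lambda>_. euclideanreal"] by simp
  have "?K = {h \<in> topspace X. h p \<in> {0}} \<inter>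
      \<Inter>((\<lambda>(x, y). {h \<in> topspace X. h x - h y \<in> {..dist x y}}) ` (S \<times> S))"
    using assms(2) by (auto simp: lipschitz_on_1_iff)
  also have "closedin X \<dots>"
  proof (intro closedin_Int closedin_Inter ballI)
    show "closedin X {h \<in> topspace X. h p \<in> {0}}"
      using proj[OF assms(2)] by (rule closedin_continuous_map_preimage) simp
    fix C assume "C \<in> (\<lambda>(x, y). {h \<in> topspace X. h x - h y \<in> {..dist x y}}) ` (S \<times> S)"
    then obtain x y where "x \<in> S" "y \<in> S" and C: "C = {h \<in> topspace X. h x - h y \<in> {..dist x y}}"
      by auto
    then have "continuous_map X euclideanreal (\<lambda>h. h x - h y)"
      using proj by (intro continuous_map_diff) auto
    then show "closedin X C" unfolding C by (rule closedin_continuous_map_preimage) simp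
  qed (use assms(2) in auto)
  finally have "closedin X ?K" .
  moreover have "compactin X (PiE S (\<lambda>x. {- dist x p..dist x p}))"
    unfolding X_def by (simp add: compactin_PiE)
  ultimately have "compactin X (?K \<inter> PiE S (\<lambda>x. {- dist x p..dist x p}))"
    by (rule closed_Int_compactin)
  moreover have "?K \<subseteq> PiE S (\<lambda>x. {- dist x p..dist x p})"
    using assms(2) by (fastforce simp: X_def lipschitz_on_1_iff dist_commute)
  ultimately show ?thesis by (simp add: Int_absorb2)
qed

lemma point_sum_attains_max:
  fixes S :: "'a::metric_space set" and a :: "'a \<Rightarrow> real"
  assumes "finite S" "p \<in> S"
  obtains h0 where "1-lipschitz_on S h0" "h0 p = 0"
    "\<And>h. 1-lipschitz_on S h \<Longrightarrow> h p = 0 \<Longrightarrow> (\<Sum>x\<in>S. a x * h x) \<le> (\<Sum>x\<in>S. a x * h0 x)"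
proof -
  define X where "X = product_topology (\<lambda>_. euclideanreal) S"
  define K where "K = {h \<in> topspace X. h p = 0 \<and> 1-lipschitz_on S h}"
  define \<Phi> where "\<Phi> h = (\<Sum>x\<in>S. a x * h x)" for h :: "'a \<Rightarrow> real"
  have "continuous_map X euclideanreal (\<lambda>h. h x)" if "x \<in> S" for x
    unfolding X_def using continuous_map_product_projection[OF that, of "\<lambda>_. euclideanreal"] by simp
  then have "continuous_map X euclideanreal \<Phi>"
    unfolding \<Phi>_def using assms(1)
    by (intro continuous_map_sum continuous_map_real_mult continuous_map_const[THEN iffD2]) auto
  moreover have "compactin X K"
    unfolding K_def X_def using assms(2) by (rule compactin_pointed_short_maps)
  ultimately have "compact (\<Phi> ` K)" using image_compactin by fastforce
  have restrict_K: "restrict h S \<in> K" if "1-lipschitz_on S h" "h p = 0" for h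
    using that assms(2) by (simp add: K_def X_def lipschitz_on_1_iff)
  have "restrict (\<lambda>_. 0) S \<in> K" by (rule restrict_K) (simp_all add: lipschitz_on_1_iff)
  then have "\<Phi> ` K \<noteq> {}" by blast
  then obtain h0 where "h0 \<in> K" and max: "\<forall>h\<in>K. \<Phi> h \<le> \<Phi> h0"
    using compact_attains_sup[OF \<open>compact (\<Phi> ` K)\<close>] by auto
  show thesis
  proof (rule that)
    show "1-lipschitz_on S h0" "h0 p = 0" using \<open>h0 \<in> K\<close> by (auto simp: K_def)
  next
    fix h :: "'a \<Rightarrow> real" assume "1-lipschitz_on S h" "h p = 0"
    then have "\<Phi> (restrict h S) \<le> \<Phi> h0" using max restrict_K by blast
    then show "(\<Sum>x\<in>S. a x * h x) \<le> (\<Sum>x\<in>S. a x * h0 x)" by (simp add: \<Phi>_def)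
  qed
qed

text \<open>
  For small \<open>t > 0\<close> the perturbation \<open>(h0 + t (h0 - g)) / (1 + t \<epsilon>)\<close> of \<open>h0\<close> is still
  1-Lipschitz on \<open>S\<close>: on pairs where \<open>h0\<close> is tight, \<open>g\<close> is almost tight as well, and on the
  finitely many other pairs \<open>h0\<close> has room to spare.
\<close>

lemma eventually_perturbation_short:
  fixes h0 g :: "'a::metric_space \<Rightarrow> real"
  assumes "finite S" "1-lipschitz_on S h0"
    and tight: "\<And>x y. x \<in> S \<Longrightarrow> y \<in> S \<Longrightarrow> h0 x - h0 y = dist x y \<Longrightarrow> (1 - \<epsilon>) * dist x y \<le> g x - g y"
  shows "\<forall>\<^sub>F t in at_right 0. \<forall>x\<in>S. \<forall>y\<in>S.
           (h0 x - h0 y) + t * ((h0 x - h0 y) - (g x - g y)) \<le> (1 + t * \<epsilon>) * dist x y"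
proof (intro eventually_ball_finite ballI)
  fix x y assume xy: "x \<in> S" "y \<in> S"
  define \<Delta> where "\<Delta> t = (h0 x - h0 y) + t * ((h0 x - h0 y) - (g x - g y)) - (1 + t * \<epsilon>) * dist x y"
    for t
  have "\<forall>\<^sub>F t in at_right 0. \<Delta> t \<le> 0"
  proof (cases "h0 x - h0 y = dist x y")
    case True
    have "(h0 x - h0 y) - (g x - g y) \<le> \<epsilon> * dist x y"
      using tight[OF xy True] True by (simp add: algebra_simps)
    then have "\<Delta> t \<le> 0" if "t > 0" for t
      using mult_left_mono[of _ _ t] that True by (fastforce simp: \<Delta>_def algebra_simps)
    then show ?thesis by (auto simp: eventually_at_right_field intro: exI[of _ 1])
  next
    case False
    then have neg: "h0 x - h0 y - dist x y < 0"
      using assms(2) xy by (auto simp: lipschitz_on_1_iff order.strict_iff_order)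
    have "(\<Delta> \<longlongrightarrow> h0 x - h0 y - dist x y) (at_right 0)"
      unfolding \<Delta>_def by (auto intro!: tendsto_eq_intros)
    from order_tendstoD(2)[OF this neg] show ?thesis by (rule eventually_mono) simp
  qed
  then show "\<forall>\<^sub>F t in at_right 0.
      (h0 x - h0 y) + t * ((h0 x - h0 y) - (g x - g y)) \<le> (1 + t * \<epsilon>) * dist x y"
    by (rule eventually_mono) (simp add: \<Delta>_def)
qed (use assms(1) in auto)

lemma point_sum_maximizer_stable:
  fixes a h0 g :: "'a::metric_space \<Rightarrow> real"
  assumes "finite S" "0 \<le> \<epsilon>" "g p = 0"
    and h0: "1-lipschitz_on S h0" "h0 p = 0"
    and max: "\<And>h. 1-lipschitz_on S h \<Longrightarrow> h p = 0 \<Longrightarrow> (\<Sum>x\<in>S. a x * h x) \<le> (\<Sum>x\<in>S. a x * h0 x)"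
    and tight: "\<And>x y. x \<in> S \<Longrightarrow> y \<in> S \<Longrightarrow> h0 x - h0 y = dist x y \<Longrightarrow> (1 - \<epsilon>) * dist x y \<le> g x - g y"
  shows "(1 - \<epsilon>) * (\<Sum>x\<in>S. a x * h0 x) \<le> (\<Sum>x\<in>S. a x * g x)"
proof -
  have "\<forall>\<^sub>F t in at_right 0. 0 < t \<and> (\<forall>x\<in>S. \<forall>y\<in>S.
          (h0 x - h0 y) + t * ((h0 x - h0 y) - (g x - g y)) \<le> (1 + t * \<epsilon>) * dist x y)"
    using eventually_perturbation_short[OF assms(1) h0(1) tight]
    by (intro eventually_conj eventually_at_right_less)
  then obtain t where t: "0 < t"
    "\<forall>x\<in>S. \<forall>y\<in>S. (h0 x - h0 y) + t * ((h0 x - h0 y) - (g x - g y)) \<le> (1 + t * \<epsilon>) * dist x y"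
    using eventually_happens'[OF trivial_limit_at_right_real] by blast
  have den: "0 < 1 + t * \<epsilon>" using t(1) assms(2) by (simp add: add_pos_nonneg)
  define h where "h x = (h0 x + t * (h0 x - g x)) / (1 + t * \<epsilon>)" for x
  have "h x - h y = ((h0 x - h0 y) + t * ((h0 x - h0 y) - (g x - g y))) / (1 + t * \<epsilon>)" for x y
    by (simp add: h_def diff_divide_distrib[symmetric] algebra_simps)
  then have "1-lipschitz_on S h"
    using t(2) den by (simp add: lipschitz_on_1_iff divide_le_eq mult.commute)
  moreover have "h p = 0" using h0(2) assms(3) by (simp add: h_def)
  ultimately have "(\<Sum>x\<in>S. a x * h x) \<le> (\<Sum>x\<in>S. a x * h0 x)" by (rule max)
  moreover have "(\<Sum>x\<in>S. a x * h x) =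
      ((\<Sum>x\<in>S. a x * h0 x) + t * ((\<Sum>x\<in>S. a x * h0 x) - (\<Sum>x\<in>S. a x * g x))) / (1 + t * \<epsilon>)"
  proof -
    have "(\<Sum>x\<in>S. a x * h x) = (\<Sum>x\<in>S. (a x * h0 x + t * (a x * h0 x - a x * g x)) / (1 + t * \<epsilon>))"
      by (rule sum.cong) (auto simp: h_def algebra_simps)
    also have "\<dots> = (\<Sum>x\<in>S. a x * h0 x + t * (a x * h0 x - a x * g x)) / (1 + t * \<epsilon>)"
      by (rule sum_divide_distrib[symmetric])
    finally show ?thesis by (simp add: sum.distrib sum_subtractf flip: sum_distrib_left)
  qed
  ultimately have "t * ((\<Sum>x\<in>S. a x * h0 x) - (\<Sum>x\<in>S. a x * g x)) \<le> t * (\<epsilon> * (\<Sum>x\<in>S. a x * h0 x))"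
    using den by (simp add: divide_le_eq algebra_simps)
  then have "(\<Sum>x\<in>S. a x * h0 x) - (\<Sum>x\<in>S. a x * g x) \<le> \<epsilon> * (\<Sum>x\<in>S. a x * h0 x)"
    using t(1) by (simp only: mult_le_cancel_left_pos)
  then show ?thesis by (simp add: algebra_simps)
qed

section \<open>Extension of 1-Lipschitz functions\<close>

lemma mcshane_extension:
  fixes f :: "'a::metric_space \<Rightarrow> real"
  assumes "finite P" "P \<noteq> {}" "1-lipschitz_on P f"
  obtains U where "1-lipschitz_on UNIV U" "\<And>x. x \<in> P \<Longrightarrow> U x = f x" "\<And>z. \<exists>x\<in>P. U z = f x + dist x z"
proof -
  define U where "U z = Min ((\<lambda>x. f x + dist x z) ` P)" for z
  have f_lip: "f x - f y \<le> dist x y" if "x \<in> P" "y \<in> P" for x y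
    using assms(3) that by (simp add: lipschitz_on_1_iff)
  have U_le: "U z \<le> f x + dist x z" if "x \<in> P" for x z
    unfolding U_def using assms(1) that by (intro Min_le) auto
  have U_attained: "\<exists>x\<in>P. U z = f x + dist x z" for z
  proof -
    have "U z \<in> (\<lambda>x. f x + dist x z) ` P" unfolding U_def using assms(1,2) by (intro Min_in) auto
    then show ?thesis by auto
  qed
  have "U z - U z' \<le> dist z z'" for z z'
  proof -
    obtain x where "x \<in> P" "U z' = f x + dist x z'" using U_attained by blast
    then show ?thesis using U_le[of x z] dist_triangle[of x z z'] by (simp add: dist_commute)
  qed
  moreover have "U x = f x" if "x \<in> P" for x
  proof -
    obtain x' where "x' \<in> P" "U x = f x' + dist x' x" using U_attained by blast
    then show ?thesis using U_le[OF that, of x] f_lip[OF that \<open>x' \<in> P\<close>] by (simp add: dist_commute)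
  qed
  ultimately show thesis using U_attained by (intro that[of U]) (auto simp: lipschitz_on_1_iff)
qed

lemma lipschitz_extension_with_gap:
  fixes f :: "'a::metric_space \<Rightarrow> real"
  assumes "finite P" "1-lipschitz_on P f" "c \<le> dist a b"
    and gap: "\<And>x y. x \<in> P \<Longrightarrow> y \<in> P \<Longrightarrow> c \<le> f x - f y + dist x b + dist y a"
  obtains F where "1-lipschitz_on UNIV F" "\<And>x. x \<in> P \<Longrightarrow> F x = f x" "c \<le> F b - F a"
proof (cases "P = {}")
  case True
  with assms(3) show thesis by (intro that[of "dist a"]) (auto simp: lipschitz_on_dist)
next
  case False
  obtain U where U: "1-lipschitz_on UNIV U" "\<And>x. x \<in> P \<Longrightarrow> U x = f x" "\<And>z. \<exists>x\<in>P. U z = f x + dist x z"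
    using mcshane_extension[OF assms(1) False assms(2)] by blast
  define m where "m = Max ((\<lambda>y. f y - dist y a) ` P)"
  have "m \<in> (\<lambda>y. f y - dist y a) ` P" unfolding m_def using assms(1) False by (intro Max_in) auto
  then obtain y0 where y0: "y0 \<in> P" "m = f y0 - dist y0 a" by blast
  have m_ge: "f y - dist y a \<le> m" if "y \<in> P" for y
    unfolding m_def using assms(1) that by (intro Max_ge) auto
  txt \<open>Capping \<open>U\<close> by \<open>m + d(a, \<cdot>)\<close>, where \<open>m\<close> is the value at \<open>a\<close> of the lower McShane extension,
    pins \<open>F a\<close> down to \<open>m\<close> without changing \<open>F\<close> on \<open>P\<close>.\<close>
  define F where "F z = min (U z) (m + dist a z)" for z
  have "U z - U z' \<le> dist z z'" "dist a z - dist a z' \<le> dist z z'" for z z'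
    using U(1) lipschitz_on_dist[of UNIV a] by (simp_all add: lipschitz_on_1_iff)
  then have "1-lipschitz_on UNIV F" unfolding lipschitz_on_1_iff F_def by (smt (verit))
  moreover have "F x = f x" if "x \<in> P" for x
    using U(2)[OF that] m_ge[OF that] by (simp add: F_def dist_commute)
  moreover have "c \<le> F b - F a"
  proof -
    have "U y0 - U a \<le> dist y0 a" using U(1) by (simp add: lipschitz_on_1_iff)
    then have "m \<le> U a" using y0 U(2)[OF y0(1)] by simp
    then have "F a = m" by (simp add: F_def)
    moreover obtain x where x: "x \<in> P" "U b = f x + dist x b" using U(3) by blast
    then have "c \<le> U b - m" using gap[OF x(1) y0(1)] y0(2) by simp
    ultimately show ?thesis using assms(3) by (simp add: F_def)
  qed
  ultimately show thesis by (rule that)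
qed

section \<open>Slices of norm-one elements of the free space\<close>

lemma cyc_monotonic_set_forcing_slice:
  fixes p :: "'a::metric_space"
  assumes "free_elem p \<mu>" "dual_norm p \<mu> = 1" "0 < e" "e \<le> 1"
  obtains A where "finite A" "A \<subseteq> {(x, y). x \<noteq> y}" "cyc_monotonic A"
    "\<And>G. G \<in> LipBall p \<Longrightarrow> \<forall>(x, y)\<in>A. 1 - e \<le> mol G x y \<Longrightarrow> G \<in> wstar_slice p \<mu> (4 * e)"
proof -
  obtain S a where S: "finite S" "p \<in> S" and approx: "\<forall>f\<in>LipBall p. \<bar>\<mu> f - (\<Sum>x\<in>S. a x * f x)\<bar> \<le> e"
    using free_elem_approx_with_base[OF assms(1,3)] by blast
  define \<Phi> where "\<Phi> h = (\<Sum>x\<in>S. a x * h x)" for h :: "'a \<Rightarrow> real"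
  obtain f where f: "f \<in> LipBall p" "1 - 2 * e < \<Phi> f"
    using point_sum_near_dual_norm[OF S(1) assms(2) approx assms(3)] unfolding \<Phi>_def by blast
  obtain h0 where h0: "1-lipschitz_on S h0" "h0 p = 0"
    and max: "\<And>h. 1-lipschitz_on S h \<Longrightarrow> h p = 0 \<Longrightarrow> \<Phi> h \<le> \<Phi> h0"
    using point_sum_attains_max[OF S, of a] unfolding \<Phi>_def by blast
  have "\<Phi> f \<le> \<Phi> h0" using f(1) by (intro max) (auto simp: LipBall_iff intro: lipschitz_on_subset)
  with f(2) have N: "1 - 2 * e < \<Phi> h0" by linarith
  define A where "A = {(x, y). x \<in> S \<and> y \<in> S \<and> x \<noteq> y \<and> h0 x - h0 y = dist x y}"
  have "finite A" by (rule finite_subset[of _ "S \<times> S"]) (auto simp: A_def S(1))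
  moreover have "A \<subseteq> {(x, y). x \<noteq> y}" by (auto simp: A_def)
  moreover have "cyc_monotonic A" by (rule cyc_monotonic_if_tight[OF h0(1)]) (auto simp: A_def)
  moreover have "G \<in> wstar_slice p \<mu> (4 * e)"
    if G: "G \<in> LipBall p" "\<forall>(x, y)\<in>A. 1 - e \<le> mol G x y" for G
  proof -
    have "(1 - e) * \<Phi> h0 \<le> \<Phi> G"
      unfolding \<Phi>_def
    proof (rule point_sum_maximizer_stable[OF S(1) _ _ h0 max[unfolded \<Phi>_def]])
      show "(1 - e) * dist x y \<le> G x - G y" if "x \<in> S" "y \<in> S" "h0 x - h0 y = dist x y" for x y
        using G(2) that by (cases "x = y") (auto simp: A_def mol_def le_divide_eq)
    qed (use assms(3) G(1) in \<open>simp_all add: LipBall_iff\<close>)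
    moreover have "(1 - e) * (1 - 2 * e) \<le> (1 - e) * \<Phi> h0"
      using N assms(4) by (intro mult_left_mono) auto
    moreover have "\<Phi> G - e \<le> \<mu> G" using approx G(1) by (force simp: \<Phi>_def)
    moreover have "0 < e * e" using assms(3) by simp
    ultimately show ?thesis using G(1) by (simp add: wstar_slice_def algebra_simps)
  qed
  ultimately show thesis by (rule that)
qed

lemma two_Lip_LTP_far_pair_in_slice:
  fixes p :: "'a::metric_space"
  assumes "two_Lip_LTP p" "free_elem p \<mu>" "dual_norm p \<mu> = 1" "0 < e" "e \<le> 1"
  obtains f g where "f \<in> wstar_slice p \<mu> (4 * e)" "g \<in> wstar_slice p \<mu> (4 * e)"
    "2 * (1 - e) \<le> lipnorm (\<lambda>x. f x - g x)"
proof -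
  obtain A where A: "finite A" "A \<subseteq> {(x, y). x \<noteq> y}" "cyc_monotonic A"
    and forcing: "\<And>G. G \<in> LipBall p \<Longrightarrow> \<forall>(x, y)\<in>A. 1 - e \<le> mol G x y \<Longrightarrow> G \<in> wstar_slice p \<mu> (4 * e)"
    using cyc_monotonic_set_forcing_slice[OF assms(2-5)] by blast
  obtain f g u v where fg: "f \<in> LipBall p" "g \<in> LipBall p" "u \<noteq> v"
    and mol: "\<forall>(x, y)\<in>A. 1 - e \<le> mol f x y \<and> 1 - e \<le> mol g x y"
    and far: "\<forall>x\<in>piA A. \<forall>y\<in>piA A.
                max (f x - f y) (g y - g x) + (1 - e) * dist u v \<le> dist x u + dist y v"
    using assms(1)[unfolded two_Lip_LTP_def, rule_format, of A e] A assms(4) by blast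
  have P: "finite (piA A)" "\<And>x y. (x, y) \<in> A \<Longrightarrow> x \<in> piA A \<and> y \<in> piA A"
    using A(1) by (force simp: piA_def)+
  have gap_le: "(1 - e) * dist u v \<le> dist u v"
    using assms(4) mult_right_mono[of "1 - e" 1 "dist u v"] by simp
  obtain F1 where F1: "1-lipschitz_on UNIV F1" "\<And>x. x \<in> piA A \<Longrightarrow> F1 x = f x"
    "(1 - e) * dist u v \<le> F1 v - F1 u"
  proof (rule lipschitz_extension_with_gap[OF P(1)])
    show "1-lipschitz_on (piA A) f"
      using fg(1) by (auto simp: LipBall_iff intro: lipschitz_on_subset)
    show "(1 - e) * dist u v \<le> f x - f y + dist x v + dist y u" if "x \<in> piA A" "y \<in> piA A" for x y
      using far that max.cobounded1[of "f y - f x" "g x - g y"] by fastforce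
  qed (use gap_le in auto)
  obtain F2 where F2: "1-lipschitz_on UNIV F2" "\<And>x. x \<in> piA A \<Longrightarrow> F2 x = g x"
    "(1 - e) * dist u v \<le> F2 u - F2 v"
  proof (rule lipschitz_extension_with_gap[OF P(1)])
    show "1-lipschitz_on (piA A) g"
      using fg(2) by (auto simp: LipBall_iff intro: lipschitz_on_subset)
    show "(1 - e) * dist u v \<le> g x - g y + dist x u + dist y v" if "x \<in> piA A" "y \<in> piA A" for x y
      using far that max.cobounded2[of "f x - f y" "g y - g x"] by fastforce
  qed (use gap_le in \<open>auto simp: dist_commute\<close>)
  have "(\<lambda>z. F1 z - F1 p) \<in> wstar_slice p \<mu> (4 * e)" "(\<lambda>z. F2 z - F2 p) \<in> wstar_slice p \<mu> (4 * e)"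
    using LipBall_normalize[OF F1(1)] LipBall_normalize[OF F2(1)] mol F1(2) F2(2) P(2)
    by (auto intro!: forcing simp: mol_def)
  moreover have "2 * (1 - e) \<le> lipnorm (\<lambda>x. (F1 x - F1 p) - (F2 x - F2 p))"
    using F1(3) F2(3) LipBall_normalize[OF F1(1)] LipBall_normalize[OF F2(1)] fg(3)
    by (intro lipnorm_diff_ge_if_opposite_slopes) auto
  ultimately show thesis by (rule that)
qed

theorem wstar_LD2P_if_two_Lip_LTP:
  fixes p :: "'a::metric_space"
  assumes "two_Lip_LTP p"
  shows "wstar_LD2P p"
  unfolding wstar_LD2P_def
proof (intro allI impI, elim conjE)
  fix \<mu> and \<alpha> :: real assume \<mu>: "free_elem p \<mu>" "dual_norm p \<mu> = 1" and "0 < \<alpha>"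
  have wide: "\<exists>f\<in>wstar_slice p \<mu> \<alpha>. \<exists>g\<in>wstar_slice p \<mu> \<alpha>. c < lipnorm (\<lambda>x. f x - g x)"
    if "c < 2" for c
  proof -
    define e where "e = min (min \<alpha> (2 - c)) 1 / 4"
    have e: "0 < e" "e \<le> 1" "4 * e \<le> \<alpha>" "c < 2 * (1 - e)"
      using \<open>0 < \<alpha>\<close> \<open>c < 2\<close> by (auto simp: e_def min_def field_simps)
    obtain f g where fg: "f \<in> wstar_slice p \<mu> (4 * e)" "g \<in> wstar_slice p \<mu> (4 * e)"
      "2 * (1 - e) \<le> lipnorm (\<lambda>x. f x - g x)"
      using two_Lip_LTP_far_pair_in_slice[OF assms \<mu> e(1,2)] by blast
    moreover have "wstar_slice p \<mu> (4 * e) \<subseteq> wstar_slice p \<mu> \<alpha>"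
      using e(3) by (auto simp: wstar_slice_def)
    moreover have "c < lipnorm (\<lambda>x. f x - g x)" using fg(3) e(4) by linarith
    ultimately show ?thesis by blast
  qed
  moreover have "wstar_slice p \<mu> \<alpha> \<subseteq> LipBall p" by (auto simp: wstar_slice_def)
  moreover have "wstar_slice p \<mu> \<alpha> \<noteq> {}" using wide[of 0] by auto
  ultimately show "lip_diam (wstar_slice p \<mu> \<alpha>) = 2" using lip_diam_eq_2_iff by blast
qed

theorem proposition4p5:
  fixes p :: "'a::metric_space"
  assumes "\<exists>x y :: 'a. x \<noteq> y"
  shows "wstar_LD2P p \<longleftrightarrow> two_Lip_LTP p"
  using two_Lip_LTP_if_wstar_LD2P[OF assms] wstar_LD2P_if_two_Lip_LTP by blast

end
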